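(* Let $|\nu|\le1$, $T>0$, $\gamma\in[0,1/4)$, and let $q:\mathbb{R}\to[0,\infty)$ satisfy $q(k)\le C_q\min\{1,k^{-2}\}$ for all $k$. Then there is $C>0$ such that for all $\varepsilon\in(0,1]$ \[ \sup_{S\in[0,T]}\int_{\mathbb{R}}q(k)|f(S,k)|^2(|k|^{2\gamma}+1)\,dk\le C(\varepsilon^2+\varepsilon^{1/2}). \]
   Context: $f(\tau,k)=e^{\tau\nu}\big[\chi_{(-1/\varepsilon,\infty)}(k)e^{-\tau(2+k\varepsilon)^2k^2}-e^{-4\tau k^2}\big]$ for $\tau\in[0,T]$, $k\in\mathbb{R}$. *)

theory Defs
  imports "HOL-Analysis.Analysis"
begin

definition fF :: "real \<Rightarrow> real \<Rightarrow> real \<Rightarrow> real \<Rightarrow> real" where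
  "fF \<epsilon> \<nu> \<tau> k = exp (\<tau> * \<nu>) *
     (indicator {-1/\<epsilon><..} k * exp (-\<tau> * (2 + k * \<epsilon>)^2 * k^2) - exp (-4 * \<tau> * k^2))"

end

theory Submission
  imports Defs
begin

text \<open>
  Write \<open>f(\<tau>,k) = exp(\<tau>\<nu>) m(\<tau>,k)\<close>. The multiplier defect \<open>m\<close> is a difference of two
  factors in \<open>[0,1]\<close>, so \<open>|m| \<le> 1\<close>; and by the mean value theorem \<open>|m| \<le> 5|k|\<epsilon>\<close>, because
  for \<open>-1 < k\<epsilon> < 1/5\<close> the two exponents differ by \<open>\<tau>k\<^sup>2 |k\<epsilon>| |4 + k\<epsilon>|\<close> while both
  exceed \<open>u = \<tau>k\<^sup>2\<close>, and \<open>u exp(-u) \<le> 1\<close>. Interpolating, \<open>m\<^sup>2 \<le> sqrt(5|k|\<epsilon>)\<close>, so the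
  integrand is at most \<open>C sqrt \<epsilon>\<close> times \<open>q(k) (|k| powr 2\<gamma> + 1) sqrt|k|\<close>, which is
  integrable since it decays like \<open>|k| powr (2\<gamma> - 3/2)\<close> and \<open>2\<gamma> - 3/2 < -1\<close>.
\<close>

lemma exp_minus_diff_le: "exp (-x) - exp (-y) \<le> exp (-x) * (y - x)"
  for x y :: real
proof -
  have "1 - (y - x) \<le> exp (x - y)"
    using exp_ge_add_one_self[of "x - y"] by linarith
  then have "exp (-x) * (1 - (y - x)) \<le> exp (-x) * exp (x - y)"
    by (intro mult_left_mono) auto
  also have "\<dots> = exp (-y)"
    by (simp flip: exp_add)
  finally show ?thesis
    by (simp add: algebra_simps)
qed

lemma abs_exp_minus_diff_le: "\<bar>exp (-a) - exp (-b)\<bar> \<le> exp (- min a b) * \<bar>a - b\<bar>"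
  for a b :: real
  using exp_minus_diff_le[of a b] exp_minus_diff_le[of b a]
  by (cases "a \<le> b") (auto simp: min_def)

lemma exp_minus_mult_le_1: "exp (-u) * u \<le> 1"
  for u :: real
proof -
  have "u \<le> exp u"
    using exp_ge_add_one_self[of u] by linarith
  then have "exp (-u) * u \<le> exp (-u) * exp u"
    by (intro mult_left_mono) auto
  then show ?thesis
    by (simp flip: exp_add)
qed

definition multiplier_defect :: "real \<Rightarrow> real \<Rightarrow> real \<Rightarrow> real" where
  "multiplier_defect \<epsilon> \<tau> k =
     indicator {-1/\<epsilon><..} k * exp (-\<tau> * (2 + k * \<epsilon>)^2 * k^2) - exp (-4 * \<tau> * k^2)"

lemma fF_eq_multiplier_defect: "fF \<epsilon> \<nu> \<tau> k = exp (\<tau> * \<nu>) * multiplier_defect \<epsilon> \<tau> k"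
  by (simp add: fF_def multiplier_defect_def)

lemma abs_multiplier_defect_le_1:
  assumes "0 \<le> \<tau>"
  shows "\<bar>multiplier_defect \<epsilon> \<tau> k\<bar> \<le> 1"
proof -
  define A where "A = exp (-\<tau> * (2 + k * \<epsilon>)^2 * k^2)"
  define B where "B = exp (-4 * \<tau> * k^2)"
  have "0 < A" "A \<le> 1" "0 < B" "B \<le> 1"
    using assms by (auto simp: A_def B_def)
  moreover have "multiplier_defect \<epsilon> \<tau> k = indicator {-1/\<epsilon><..} k * A - B"
    by (simp add: multiplier_defect_def A_def B_def)
  ultimately show ?thesis
    by (simp add: indicator_def abs_le_iff)
qed

lemma abs_multiplier_defect_le:
  assumes "0 < \<epsilon>" "0 \<le> \<tau>"
  shows "\<bar>multiplier_defect \<epsilon> \<tau> k\<bar> \<le> 5 * \<bar>k\<bar> * \<epsilon>"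
proof (cases "-1 < k * \<epsilon> \<and> k * \<epsilon> < 1/5")
  case False
  then have "1 \<le> 5 * \<bar>k * \<epsilon>\<bar>"
    by auto
  then have "1 \<le> 5 * \<bar>k\<bar> * \<epsilon>"
    using assms(1) by (simp add: abs_mult)
  then show ?thesis
    using abs_multiplier_defect_le_1[OF assms(2), of \<epsilon> k] by linarith
next
  case True
  define u where "u = \<tau> * k^2"
  define a where "a = u * (2 + k * \<epsilon>)^2"
  define b where "b = u * 4"
  have u: "0 \<le> u"
    using assms(2) by (simp add: u_def)
  have "k > -1/\<epsilon>"
    using True assms(1) by (simp add: field_simps)
  then have defect: "multiplier_defect \<epsilon> \<tau> k = exp (-a) - exp (-b)"
    by (simp add: multiplier_defect_def a_def b_def u_def algebra_simps)
  have "1 \<le> (2 + k * \<epsilon>)^2"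
    using True by (intro one_le_power) linarith
  then have "u \<le> min a b"
    using u by (simp add: a_def b_def mult_le_cancel_left1)
  have "a - b = u * ((k * \<epsilon>) * (4 + k * \<epsilon>))"
    by (simp add: a_def b_def power2_eq_square algebra_simps)
  then have "\<bar>a - b\<bar> = u * (\<bar>k * \<epsilon>\<bar> * \<bar>4 + k * \<epsilon>\<bar>)"
    using u by (simp add: abs_mult)
  also have "\<dots> \<le> u * (\<bar>k\<bar> * \<epsilon> * 5)"
    using True u assms(1) by (intro mult_left_mono) (auto simp: abs_mult intro!: mult_left_mono)
  finally have diff: "\<bar>a - b\<bar> \<le> u * (5 * \<bar>k\<bar> * \<epsilon>)"
    by (simp add: ac_simps)
  have "\<bar>multiplier_defect \<epsilon> \<tau> k\<bar> \<le> exp (- min a b) * \<bar>a - b\<bar>"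
    unfolding defect by (rule abs_exp_minus_diff_le)
  also have "\<dots> \<le> exp (-u) * (u * (5 * \<bar>k\<bar> * \<epsilon>))"
    using \<open>u \<le> min a b\<close> diff by (intro mult_mono) auto
  also have "\<dots> = (exp (-u) * u) * (5 * \<bar>k\<bar> * \<epsilon>)"
    by simp
  also have "\<dots> \<le> 5 * \<bar>k\<bar> * \<epsilon>"
    using exp_minus_mult_le_1[of u] u assms(1) by (intro mult_left_le_one_le) auto
  finally show ?thesis .
qed

lemma sq_le_sqrt_abs:
  fixes x :: real
  assumes "\<bar>x\<bar> \<le> 1"
  shows "x^2 \<le> sqrt \<bar>x\<bar>"
proof (rule real_le_rsqrt)
  have "(x^2)^2 = \<bar>x\<bar>^4"
    by (simp flip: power_mult)
  also have "\<dots> \<le> \<bar>x\<bar>^1"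
    using assms by (intro power_decreasing) auto
  finally show "(x^2)^2 \<le> \<bar>x\<bar>"
    by simp
qed

lemma fF_sq_le:
  assumes "0 < \<epsilon>" "0 \<le> \<tau>" "\<nu> \<le> 1"
  shows "\<bar>fF \<epsilon> \<nu> \<tau> k\<bar>^2 \<le> exp (2 * \<tau>) * (sqrt 5 * sqrt \<epsilon>) * sqrt \<bar>k\<bar>"
proof -
  let ?m = "multiplier_defect \<epsilon> \<tau> k"
  have "?m^2 \<le> sqrt \<bar>?m\<bar>"
    using abs_multiplier_defect_le_1[OF assms(2)] by (rule sq_le_sqrt_abs)
  also have "\<dots> \<le> sqrt (5 * \<bar>k\<bar> * \<epsilon>)"
    using abs_multiplier_defect_le[OF assms(1,2)] by simp
  also have "\<dots> = sqrt 5 * sqrt \<epsilon> * sqrt \<bar>k\<bar>"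
    by (simp add: real_sqrt_mult)
  finally have m: "?m^2 \<le> sqrt 5 * sqrt \<epsilon> * sqrt \<bar>k\<bar>" .
  have "exp (\<tau> * \<nu>)^2 = exp (2 * (\<tau> * \<nu>))"
    by (simp flip: exp_double)
  also have "\<dots> \<le> exp (2 * \<tau>)"
    using assms(2,3) by (simp add: mult_left_le)
  finally have e: "exp (\<tau> * \<nu>)^2 \<le> exp (2 * \<tau>)" .
  have "\<bar>fF \<epsilon> \<nu> \<tau> k\<bar>^2 = exp (\<tau> * \<nu>)^2 * ?m^2"
    by (simp add: fF_eq_multiplier_defect power_mult_distrib)
  also have "\<dots> \<le> exp (2 * \<tau>) * (sqrt 5 * sqrt \<epsilon> * sqrt \<bar>k\<bar>)"
    using e m by (intro mult_mono) auto
  finally show ?thesis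
    by (simp add: ac_simps)
qed

lemma integral_fF_le:
  assumes "integrable lborel (\<lambda>k. q k * w k * sqrt \<bar>k\<bar>)" "\<And>k. 0 \<le> q k" "\<And>k. 0 \<le> w k"
    and "0 < \<epsilon>" "0 \<le> \<tau>" "\<nu> \<le> 1"
  shows "(LINT k|lborel. q k * \<bar>fF \<epsilon> \<nu> \<tau> k\<bar>^2 * w k)
           \<le> exp (2 * \<tau>) * (sqrt 5 * sqrt \<epsilon>) * (LINT k|lborel. q k * w k * sqrt \<bar>k\<bar>)"
proof -
  let ?c = "exp (2 * \<tau>) * (sqrt 5 * sqrt \<epsilon>)"
  have "q k * \<bar>fF \<epsilon> \<nu> \<tau> k\<bar>^2 * w k \<le> q k * (?c * sqrt \<bar>k\<bar>) * w k" for k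
    using fF_sq_le[OF assms(4-6), of k] assms(2,3)[of k] by (intro mult_right_mono mult_left_mono) auto
  moreover have "integrable lborel (\<lambda>k. ?c * (q k * w k * sqrt \<bar>k\<bar>))"
    using assms(1) by (rule integrable_mult_right)
  ultimately have "(LINT k|lborel. q k * \<bar>fF \<epsilon> \<nu> \<tau> k\<bar>^2 * w k) \<le> (LINT k|lborel. ?c * (q k * w k * sqrt \<bar>k\<bar>))"
    using assms(2-4) by (intro integral_mono') (auto simp: ac_simps intro!: mult_nonneg_nonneg)
  then show ?thesis
    by simp
qed

definition powr_decay :: "real \<Rightarrow> real \<Rightarrow> real" where
  "powr_decay p x = (if \<bar>x\<bar> \<le> 1 then 1 else \<bar>x\<bar> powr p)"

lemma powr_decay_nonneg: "0 \<le> powr_decay p x"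
  by (simp add: powr_decay_def)

lemma borel_measurable_powr_decay [measurable]: "powr_decay p \<in> borel_measurable borel"
  unfolding powr_decay_def by measurable

lemma nn_integral_powr_tail:
  fixes p :: real
  assumes "p < -1"
  shows "(\<integral>\<^sup>+x. ennreal (indicator {1..} x * x powr p) \<partial>lborel) = ennreal (-1 / (p + 1))"
proof (rule nn_integral_has_integral_lborel)
  have "((\<lambda>x. x powr p) has_integral -1 / (p + 1)) {1..}"
    using has_integral_powr_to_inf[of p 1] assms by simp
  then have "((\<lambda>x. if x \<in> {1..} then x powr p else 0) has_integral -1 / (p + 1)) UNIV"
    by (simp only: has_integral_restrict_UNIV)
  then show "((\<lambda>x. indicator {1..} x * x powr p) has_integral -1 / (p + 1)) UNIV"
    by (rule has_integral_cong[THEN iffD1, rotated]) simp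
qed (auto simp: indicator_def)

lemma integrable_powr_decay:
  fixes p :: real
  assumes "p < -1"
  shows "integrable lborel (powr_decay p)"
proof (rule integrableI_nonneg)
  define t where "t x = ennreal (indicator {1..} x * x powr p)" for x :: real
  have [measurable]: "t \<in> borel_measurable borel"
    unfolding t_def by measurable
  have "(\<integral>\<^sup>+x. t (-x) \<partial>lborel) = (\<integral>\<^sup>+x. t x \<partial>lborel)"
    using nn_integral_real_affine[of t "-1" 0] by simp
  then have tails: "(\<integral>\<^sup>+x. t x \<partial>lborel) + (\<integral>\<^sup>+x. t (-x) \<partial>lborel) < \<infinity>"
    using nn_integral_powr_tail[OF assms] by (simp add: t_def)
  have "ennreal (powr_decay p x) \<le> indicator {-1..1} x + (t x + t (-x))" for x
    by (auto simp: powr_decay_def t_def indicator_def abs_real_def)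
  then have "(\<integral>\<^sup>+x. powr_decay p x \<partial>lborel)
      \<le> (\<integral>\<^sup>+x. indicator {-1..1} x + (t x + t (-x)) \<partial>lborel)"
    by (intro nn_integral_mono)
  also have "\<dots> = 2 + ((\<integral>\<^sup>+x. t x \<partial>lborel) + (\<integral>\<^sup>+x. t (-x) \<partial>lborel))"
    by (simp add: nn_integral_add t_def)
  finally show "(\<integral>\<^sup>+x. powr_decay p x \<partial>lborel) < \<infinity>"
    using tails by (simp add: order_le_less_trans)
qed (auto simp: powr_decay_nonneg)

lemma weight_le_powr_decay:
  fixes a Cq k :: real
  assumes "0 \<le> a" "0 \<le> q k" "q k \<le> Cq" "k \<noteq> 0 \<Longrightarrow> q k \<le> Cq / k^2"
  shows "q k * (\<bar>k\<bar> powr a + 1) * sqrt \<bar>k\<bar> \<le> 2 * Cq * powr_decay (a - 3/2) k"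
proof (cases "\<bar>k\<bar> \<le> 1")
  case True
  then have "\<bar>k\<bar> powr a \<le> 1" "sqrt \<bar>k\<bar> \<le> 1"
    using assms(1) by (auto intro: powr_le1)
  then have "q k * (\<bar>k\<bar> powr a + 1) * sqrt \<bar>k\<bar> \<le> Cq * 2 * 1"
    using assms(2,3) by (intro mult_mono) auto
  then show ?thesis
    using True by (simp add: powr_decay_def)
next
  case False
  then have k: "1 < \<bar>k\<bar>" "k \<noteq> 0"
    by auto
  have "\<bar>k\<bar> powr 2 = k^2"
    by (simp add: powr_numeral)
  then have "q k \<le> Cq / \<bar>k\<bar> powr 2"
    using assms(4) k by simp
  moreover have "\<bar>k\<bar> powr a + 1 \<le> 2 * \<bar>k\<bar> powr a"
    using k assms(1) ge_one_powr_ge_zero[of "\<bar>k\<bar>" a] by simp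
  moreover have "0 \<le> Cq"
    using assms(2,3) by linarith
  ultimately have "q k * (\<bar>k\<bar> powr a + 1) * sqrt \<bar>k\<bar>
      \<le> (Cq / \<bar>k\<bar> powr 2) * (2 * \<bar>k\<bar> powr a) * \<bar>k\<bar> powr (1/2)"
    using assms(2) by (intro mult_mono) (auto simp: powr_half_sqrt)
  also have "\<dots> = 2 * Cq * (\<bar>k\<bar> powr a * \<bar>k\<bar> powr (1/2) / \<bar>k\<bar> powr 2)"
    by simp
  also have "\<bar>k\<bar> powr a * \<bar>k\<bar> powr (1/2) / \<bar>k\<bar> powr 2 = \<bar>k\<bar> powr (a + 1/2 - 2)"
    by (simp only: powr_add powr_diff)
  finally show ?thesis
    using False by (simp add: powr_decay_def)
qed

lemma integrable_weight_sqrt: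
  fixes a Cq :: real
  assumes [measurable]: "q \<in> borel_measurable borel"
    and "\<And>k. 0 \<le> q k" "\<And>k. q k \<le> Cq" "\<And>k. k \<noteq> 0 \<Longrightarrow> q k \<le> Cq / k^2"
    and "0 \<le> a" "a < 1/2"
  shows "integrable lborel (\<lambda>k. q k * (\<bar>k\<bar> powr a + 1) * sqrt \<bar>k\<bar>)"
proof (rule Bochner_Integration.integrable_bound)
  show "integrable lborel (\<lambda>k. 2 * Cq * powr_decay (a - 3/2) k)"
    using assms(6) by (intro integrable_mult_right integrable_powr_decay) simp
  show "AE k in lborel. norm (q k * (\<bar>k\<bar> powr a + 1) * sqrt \<bar>k\<bar>)
          \<le> norm (2 * Cq * powr_decay (a - 3/2) k)"
  proof (rule AE_I2)
    fix k :: real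
    have "q k * (\<bar>k\<bar> powr a + 1) * sqrt \<bar>k\<bar> \<le> 2 * Cq * powr_decay (a - 3/2) k"
      by (rule weight_le_powr_decay) (use assms in auto)
    then show "norm (q k * (\<bar>k\<bar> powr a + 1) * sqrt \<bar>k\<bar>) \<le> norm (2 * Cq * powr_decay (a - 3/2) k)"
      using assms(2)[of k] by simp
  qed
qed measurable

lemma le_min_one_inverse_sq:
  fixes c x k :: real
  assumes "0 \<le> c" "x \<le> c * min 1 (1 / k^2)"
  shows "x \<le> c" "x \<le> c / k^2"
  using assms order_trans[OF assms(2) mult_left_mono[OF min.cobounded2 assms(1)]]
  by (auto intro: order_trans[OF _ mult_left_le])

theorem mainTheorem15:
  fixes \<nu> T \<gamma> Cq :: real and q :: "real \<Rightarrow> real"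
  assumes "\<bar>\<nu>\<bar> \<le> 1" and "T > 0" and "0 \<le> \<gamma>" and "\<gamma> < 1/4"
    and "q \<in> borel_measurable borel"
    and "\<And>k. q k \<ge> 0"
    and "q 0 \<le> Cq"
    and "\<And>k. k \<noteq> 0 \<Longrightarrow> q k \<le> Cq * min 1 (1 / k^2)"
  shows "\<exists>C>0. \<forall>\<epsilon>. 0 < \<epsilon> \<and> \<epsilon> \<le> 1 \<longrightarrow>
           (\<forall>S\<in>{0..T}. (LINT k|lborel. q k * \<bar>fF \<epsilon> \<nu> S k\<bar>^2 * (\<bar>k\<bar> powr (2*\<gamma>) + 1))
              \<le> C * (\<epsilon>^2 + \<epsilon> powr (1/2)))"
proof -
  have "0 \<le> Cq"
    using assms(6,7) by (rule order_trans)
  have q_le: "q k \<le> Cq" for k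
    using assms(7) le_min_one_inverse_sq(1)[OF \<open>0 \<le> Cq\<close> assms(8)] by (cases "k = 0") auto
  have q_le_sq: "q k \<le> Cq / k^2" if "k \<noteq> 0" for k
    using le_min_one_inverse_sq(2)[OF \<open>0 \<le> Cq\<close> assms(8)[OF that]] .
  let ?w = "\<lambda>k. q k * (\<bar>k\<bar> powr (2*\<gamma>) + 1) * sqrt \<bar>k\<bar>"
  have int: "integrable lborel ?w"
    using assms(3,4) by (intro integrable_weight_sqrt[OF assms(5,6) q_le q_le_sq]) auto
  define W where "W = (LINT k|lborel. ?w k)"
  have "0 \<le> W"
    unfolding W_def using assms(6) by (intro Bochner_Integration.integral_nonneg mult_nonneg_nonneg) auto
  define C where "C = exp (2 * T) * sqrt 5 * W + 1"
  have "0 < C"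
    unfolding C_def using \<open>0 \<le> W\<close> by (simp add: add_nonneg_pos)
  have "(LINT k|lborel. q k * \<bar>fF \<epsilon> \<nu> S k\<bar>^2 * (\<bar>k\<bar> powr (2*\<gamma>) + 1))
          \<le> C * (\<epsilon>^2 + \<epsilon> powr (1/2))" if "0 < \<epsilon>" "S \<in> {0..T}" for \<epsilon> S
  proof -
    have "(LINT k|lborel. q k * \<bar>fF \<epsilon> \<nu> S k\<bar>^2 * (\<bar>k\<bar> powr (2*\<gamma>) + 1))
            \<le> exp (2 * S) * (sqrt 5 * sqrt \<epsilon>) * W"
      unfolding W_def using that assms(1,6) by (intro integral_fF_le int) auto
    also have "\<dots> \<le> exp (2 * T) * (sqrt 5 * sqrt \<epsilon>) * W"
      using that \<open>0 \<le> W\<close> by (intro mult_right_mono) auto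
    also have "\<dots> \<le> C * sqrt \<epsilon>"
      using that by (simp add: C_def algebra_simps)
    also have "\<dots> \<le> C * (\<epsilon>^2 + \<epsilon> powr (1/2))"
      using \<open>0 < C\<close> that by (intro mult_left_mono) (auto simp: powr_half_sqrt)
    finally show ?thesis .
  qed
  then show ?thesis
    using \<open>0 < C\<close> by blast
qed

end
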